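(* Let $\mathcal F=(F,\rightarrowtail)$ be a finite argumentation framework. If $A\subseteq F$ is statically tenable, then $A$ is contained in some weakly complete extension of $\mathcal F$.
   Context: An argumentation framework $\mathcal F=(F,\rightarrowtail)$ consists of a set $F$ of arguments and an attack relation $\rightarrowtail\subseteq F\times F$. An argument $a$ attacks a set $B$ if $a\rightarrowtail b$ for some $b\in B$. $A^+=\{x\in F:\exists a\in A,\ a\rightarrowtail x\}$. A set is conflict-free if none of its elements attacks one of its elements. $A\succeq B$ ($A$ is as cogent as $B$) means $A$ is conflict-free and every $b\in B$ that attacks $A$ belongs to $A^+$. $A\subseteq F$ is statically tenable if for every finite conflict-free $B\subseteq F$ there is a conflict-free $C\supseteq A$ with $C\succeq B$. A weakly complete labeling is a map $L:F\to\{\mathtt{in},\mathtt{out},\mathtt{undec}\}$ such that for every $a\in F$: if $L(a)=\mathtt{in}$ then no attacker of $a$ is labeled $\mathtt{in}$; if $L(a)=\mathtt{out}$ then some attacker of $a$ is labeled $\mathtt{in}$; if $L(a)=\mathtt{undec}$ then some attacker of $a$ is labeled $\mathtt{undec}$ and no attacker of $a$ is labeled $\mathtt{in}$. A set is a weakly complete extension if it equals $\{a:L(a)=\mathtt{in}\}$ for some weakly complete labeling $L$. *)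

theory Defs
  imports Main
begin

definition AF :: "'a set \<Rightarrow> ('a \<Rightarrow> 'a \<Rightarrow> bool) \<Rightarrow> bool" where
  "AF F att \<longleftrightarrow> (\<forall>a b. att a b \<longrightarrow> a \<in> F \<and> b \<in> F)"

definition attacks_set :: "('a \<Rightarrow> 'a \<Rightarrow> bool) \<Rightarrow> 'a \<Rightarrow> 'a set \<Rightarrow> bool" where
  "attacks_set att a B \<longleftrightarrow> (\<exists>b\<in>B. att a b)"

definition plus :: "'a set \<Rightarrow> ('a \<Rightarrow> 'a \<Rightarrow> bool) \<Rightarrow> 'a set \<Rightarrow> 'a set" where
  "plus F att A = {x \<in> F. \<exists>a\<in>A. att a x}"

definition conflict_free :: "('a \<Rightarrow> 'a \<Rightarrow> bool) \<Rightarrow> 'a set \<Rightarrow> bool" where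
  "conflict_free att A \<longleftrightarrow> (\<forall>a\<in>A. \<not> attacks_set att a A)"

definition cogent :: "'a set \<Rightarrow> ('a \<Rightarrow> 'a \<Rightarrow> bool) \<Rightarrow> 'a set \<Rightarrow> 'a set \<Rightarrow> bool" where
  "cogent F att A B \<longleftrightarrow> conflict_free att A \<and>
     (\<forall>b\<in>B. attacks_set att b A \<longrightarrow> b \<in> plus F att A)"

definition statically_tenable :: "'a set \<Rightarrow> ('a \<Rightarrow> 'a \<Rightarrow> bool) \<Rightarrow> 'a set \<Rightarrow> bool" where
  "statically_tenable F att A \<longleftrightarrow> A \<subseteq> F \<and>
     (\<forall>B. B \<subseteq> F \<and> finite B \<and> conflict_free att B \<longrightarrow>
        (\<exists>C. A \<subseteq> C \<and> C \<subseteq> F \<and> conflict_free att C \<and> cogent F att C B))"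

datatype label = In | Out | Undec

definition weakly_complete_labeling ::
  "'a set \<Rightarrow> ('a \<Rightarrow> 'a \<Rightarrow> bool) \<Rightarrow> ('a \<Rightarrow> label) \<Rightarrow> bool" where
  "weakly_complete_labeling F att L \<longleftrightarrow> (\<forall>a\<in>F.
     (L a = In \<longrightarrow> \<not> (\<exists>b\<in>F. att b a \<and> L b = In)) \<and>
     (L a = Out \<longrightarrow> (\<exists>b\<in>F. att b a \<and> L b = In)) \<and>
     (L a = Undec \<longrightarrow> (\<exists>b\<in>F. att b a \<and> L b = Undec) \<and> \<not> (\<exists>b\<in>F. att b a \<and> L b = In)))"

definition weakly_complete_extension :: "'a set \<Rightarrow> ('a \<Rightarrow> 'a \<Rightarrow> bool) \<Rightarrow> 'a set \<Rightarrow> bool" where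
  "weakly_complete_extension F att E \<longleftrightarrow>
     (\<exists>L. weakly_complete_labeling F att L \<and> E = {a \<in> F. L a = In})"

end

theory Submission
  imports Defs
begin

text \<open>Take a maximal statically tenable superset E of A (F is finite) and label E in, the
arguments attacked by E out, and the rest undec. Only the undec clause needs an argument:
if an undec argument a had no undec attacker, all its attackers would be attacked by E,
and then insert a E would still be statically tenable, contradicting maximality.\<close>

lemma statically_tenable_conflict_free:
  assumes "statically_tenable F att E"
  shows "conflict_free att E"
proof -
  have "{} \<subseteq> F \<and> finite {} \<and> conflict_free att {}"
    unfolding conflict_free_def by simp
  then obtain C where "E \<subseteq> C" "conflict_free att C"
    using assms unfolding statically_tenable_def by blast
  then show ?thesis unfolding conflict_free_def attacks_set_def by blast
qed

lemma statically_tenable_insert_defended: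
  assumes af: "AF F att" and st: "statically_tenable F att E"
    and aF: "a \<in> F" and a_unattacked: "a \<notin> plus F att E"
    and defended: "\<forall>b\<in>F. att b a \<longrightarrow> b \<in> plus F att E"
  shows "statically_tenable F att (insert a E)"
  unfolding statically_tenable_def
proof (intro conjI allI impI)
  have EF: "E \<subseteq> F" using st unfolding statically_tenable_def by blast
  then show "insert a E \<subseteq> F" using aF by blast
  have no_self_attack: "\<not> att a a" using defended aF a_unattacked by blast
  fix B assume B: "B \<subseteq> F \<and> finite B \<and> conflict_free att B"
  \<comment> \<open>Testing E against B' instead of B forces the witness C not to be attacked by a.\<close>
  define B' where "B' = insert a {b \<in> B. \<not> att a b \<and> \<not> att b a}"
  have "B' \<subseteq> F \<and> finite B' \<and> conflict_free att B'"
    using B aF no_self_attack unfolding B'_def conflict_free_def attacks_set_def by auto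
  then obtain C where C: "E \<subseteq> C" "C \<subseteq> F" "conflict_free att C" "cogent F att C B'"
    using st unfolding statically_tenable_def by blast
  have C_not_attacking: "\<not> att c a" if "c \<in> C" for c
  proof
    assume "att c a"
    with af defended have "c \<in> plus F att E" unfolding AF_def by blast
    then obtain e where "e \<in> E" "att e c" unfolding plus_def by blast
    with C(1,3) \<open>c \<in> C\<close> show False unfolding conflict_free_def attacks_set_def by blast
  qed
  have C_not_attacked: "\<not> attacks_set att a C"
  proof
    assume "attacks_set att a C"
    with C(4) have "a \<in> plus F att C" unfolding B'_def cogent_def by blast
    with C_not_attacking show False unfolding plus_def by blast
  qed
  have cf: "conflict_free att (insert a C)"
    using C(3) C_not_attacked C_not_attacking no_self_attack
    unfolding conflict_free_def attacks_set_def by blast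
  have "b \<in> plus F att (insert a C)"
    if "b \<in> B" and b_attacks: "attacks_set att b (insert a C)" for b
  proof -
    have bF: "b \<in> F" using that B by blast
    consider "att b a" | "att a b" | "\<not> att b a" "\<not> att a b" by blast
    then show ?thesis
    proof cases
      case 1
      then show ?thesis using defended bF C(1) unfolding plus_def by blast
    next
      case 2
      then show ?thesis using bF unfolding plus_def by blast
    next
      case 3
      then have "b \<in> B'" "attacks_set att b C"
        using that unfolding B'_def attacks_set_def by auto
      then have "b \<in> plus F att C" using C(4) unfolding cogent_def by blast
      then show ?thesis unfolding plus_def by blast
    qed
  qed
  with cf have "cogent F att (insert a C) B" unfolding cogent_def by blast
  with C(1,2) aF cf
  show "\<exists>C. insert a E \<subseteq> C \<and> C \<subseteq> F \<and> conflict_free att C \<and> cogent F att C B"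
    by (intro exI[of _ "insert a C"]) blast
qed

lemma weakly_complete_extensionI:
  assumes EF: "E \<subseteq> F" and cf: "conflict_free att E"
    and undec_attacked: "\<And>a. a \<in> F \<Longrightarrow> a \<notin> E \<Longrightarrow> a \<notin> plus F att E \<Longrightarrow>
      \<exists>b\<in>F. att b a \<and> b \<notin> E \<and> b \<notin> plus F att E"
  shows "weakly_complete_extension F att E"
proof -
  define L where "L a = (if a \<in> E then In else if a \<in> plus F att E then Out else Undec)" for a
  have "weakly_complete_labeling F att L"
    unfolding weakly_complete_labeling_def
  proof (intro ballI conjI impI)
    fix a assume aF: "a \<in> F"
    show "\<not> (\<exists>b\<in>F. att b a \<and> L b = In)" if "L a = In"
      using that cf unfolding L_def conflict_free_def attacks_set_def by (auto split: if_splits)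
    show "\<exists>b\<in>F. att b a \<and> L b = In" if "L a = Out"
      using that EF unfolding L_def plus_def by (auto split: if_splits)
    show "\<not> (\<exists>b\<in>F. att b a \<and> L b = In)" if "L a = Undec"
      using that aF unfolding L_def plus_def by (auto split: if_splits)
    show "\<exists>b\<in>F. att b a \<and> L b = Undec" if "L a = Undec"
      using that undec_attacked[OF aF] unfolding L_def by (auto split: if_splits)
  qed
  moreover have "E = {a \<in> F. L a = In}" using EF by (auto simp: L_def)
  ultimately show ?thesis unfolding weakly_complete_extension_def by blast
qed

lemma maximal_statically_tenable_undec_attacked:
  assumes af: "AF F att" and st: "statically_tenable F att E"
    and maximal: "\<not> statically_tenable F att (insert a E)"
    and aF: "a \<in> F" and "a \<notin> plus F att E"
  shows "\<exists>b\<in>F. att b a \<and> b \<notin> E \<and> b \<notin> plus F att E"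
proof (rule ccontr)
  assume "\<not> ?thesis"
  with \<open>a \<notin> plus F att E\<close> aF have "\<forall>b\<in>F. att b a \<longrightarrow> b \<in> plus F att E"
    unfolding plus_def by blast
  with statically_tenable_insert_defended[OF af st aF \<open>a \<notin> plus F att E\<close>] maximal
  show False by blast
qed

theorem mainTheorem14:
  fixes F :: "'a set" and att :: "'a \<Rightarrow> 'a \<Rightarrow> bool" and A :: "'a set"
  assumes "AF F att" and "finite F"
    and "statically_tenable F att A"
  shows "\<exists>E. weakly_complete_extension F att E \<and> A \<subseteq> E"
proof -
  let ?S = "{E. E \<subseteq> F \<and> A \<subseteq> E \<and> statically_tenable F att E}"
  have fin: "finite ?S" using \<open>finite F\<close> by (auto intro: finite_subset[of _ "Pow F"])
  have "A \<in> ?S" using assms(3) unfolding statically_tenable_def by blast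
  then obtain E where "E \<in> ?S" and maximal: "\<forall>X\<in>?S. E \<subseteq> X \<longrightarrow> E = X"
    using finite_has_maximal[OF fin] by blast
  then have EF: "E \<subseteq> F" and "A \<subseteq> E" and st: "statically_tenable F att E" by auto
  have "\<not> statically_tenable F att (insert a E)" if "a \<in> F" "a \<notin> E" for a
    using maximal that EF \<open>A \<subseteq> E\<close> by blast
  then have "weakly_complete_extension F att E"
    using weakly_complete_extensionI[OF EF statically_tenable_conflict_free[OF st]]
      maximal_statically_tenable_undec_attacked[OF assms(1) st] by blast
  with \<open>A \<subseteq> E\<close> show ?thesis by blast
qed

end
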